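(* Let $m,n\ge 2$, let $W'$ be a channel from $\{1,\dots,m\}$ to $\{1,2\}$, and let $W''$ be a channel from $\{1,2\}$ to $\{1,\dots,n\}$ with $W''_{1,*}\ne W''_{2,*}$; set $W=W'W''$. Let $\mathcal{S}$ be a finite set, $p_S$ a probability distribution on $\mathcal{S}$, and $K^{(s)}$ ($s\in\mathcal{S}$) channels from $\{1,\dots,m\}$ to $\{1,2\}$ such that $W'=\sum_{s\in\mathcal{S}}p_S(s)K^{(s)}$. Define the channel $V$ from the set $\{1,\dots,m\}^{\mathcal{S}}$ of maps $u:\mathcal{S}\to\{1,\dots,m\}$ to $\{1,\dots,n\}$ by $V_{u,*}=\big(\sum_{s}p_S(s)K^{(s)}_{u(s),*}\big)W''$, so that $C(V)$ is the capacity of the state-dependent channel $x,s\mapsto (K^{(s)}W'')_{x,*}$ with the state $S\sim p_S$ available causally at the encoder. Then $C(V)=C(W)$ (the causal state information at the encoder does not increase the capacity) if and only if there exist $i_1,i_2\in\{1,\dots,m\}$ such that every $K^{(s)}$ with $p_S(s)>0$ is $(i_1,i_2)$-ended.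
   Context: A channel from a finite set $A$ to a finite set $B$ is a row-stochastic matrix; $W_{x,*}$ denotes row $x$. For a probability distribution $\mu$ on the input set, $I(\mu,W)=\sum_x\mu_x D(W_{x,*}\|\mu W)$ (Kullback–Leibler divergence) and $C(W)=\max_\mu I(\mu,W)$. A channel $K$ from $\{1,\dots,m\}$ to $\{1,2\}$ is called $(i_1,i_2)$-ended if $K_{i_1,1}=\min_i K_{i,1}$ and $K_{i_2,1}=\max_i K_{i,1}$ (equivalently, all rows of $K$ lie on the segment from $K_{i_1,*}$ to $K_{i_2,*}$). *)

theory Defs
  imports "HOL-Analysis.Analysis"
begin

text \<open>A channel from a finite set A to a finite set B is a row-stochastic matrix,
  represented as a function W :: 'a => 'b => real (only values on A x B matter).\<close>
definition channel :: "'a set \<Rightarrow> 'b set \<Rightarrow> ('a \<Rightarrow> 'b \<Rightarrow> real) \<Rightarrow> bool" where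
  "channel A B W \<longleftrightarrow> finite A \<and> finite B \<and> (\<forall>x\<in>A. \<forall>y\<in>B. 0 \<le> W x y) \<and> (\<forall>x\<in>A. (\<Sum>y\<in>B. W x y) = 1)"

definition pdist :: "'a set \<Rightarrow> ('a \<Rightarrow> real) \<Rightarrow> bool" where
  "pdist A \<mu> \<longleftrightarrow> finite A \<and> (\<forall>x\<in>A. 0 \<le> \<mu> x) \<and> sum \<mu> A = 1"

definition out_dist :: "'a set \<Rightarrow> ('a \<Rightarrow> real) \<Rightarrow> ('a \<Rightarrow> 'b \<Rightarrow> real) \<Rightarrow> 'b \<Rightarrow> real" where
  "out_dist A \<mu> W y = (\<Sum>x\<in>A. \<mu> x * W x y)"

text \<open>Kullback-Leibler divergence D(P||Q) (natural logarithm), sum over the support of P.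
  (Only used where P is absolutely continuous w.r.t. Q.)\<close>
definition KL :: "'b set \<Rightarrow> ('b \<Rightarrow> real) \<Rightarrow> ('b \<Rightarrow> real) \<Rightarrow> real" where
  "KL B P Q = (\<Sum>y\<in>B. if P y > 0 then P y * ln (P y / Q y) else 0)"

definition mutual_info :: "'a set \<Rightarrow> 'b set \<Rightarrow> ('a \<Rightarrow> real) \<Rightarrow> ('a \<Rightarrow> 'b \<Rightarrow> real) \<Rightarrow> real" where
  "mutual_info A B \<mu> W = (\<Sum>x\<in>A. \<mu> x * KL B (W x) (out_dist A \<mu> W))"

definition capacity :: "'a set \<Rightarrow> 'b set \<Rightarrow> ('a \<Rightarrow> 'b \<Rightarrow> real) \<Rightarrow> real" where
  "capacity A B W = (SUP \<mu>\<in>{\<mu>. pdist A \<mu>}. mutual_info A B \<mu> W)"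

definition chan_comp :: "'b set \<Rightarrow> ('a \<Rightarrow> 'b \<Rightarrow> real) \<Rightarrow> ('b \<Rightarrow> 'c \<Rightarrow> real) \<Rightarrow> 'a \<Rightarrow> 'c \<Rightarrow> real" where
  "chan_comp B W1 W2 x z = (\<Sum>y\<in>B. W1 x y * W2 y z)"

definition ended :: "nat \<Rightarrow> (nat \<Rightarrow> nat \<Rightarrow> real) \<Rightarrow> nat \<Rightarrow> nat \<Rightarrow> bool" where
  "ended m K i1 i2 \<longleftrightarrow> K i1 1 = (MIN i\<in>{1..m}. K i 1) \<and> K i2 1 = (MAX i\<in>{1..m}. K i 1)"

end

theory Submission
  imports Defs "HOL-Real_Asymp.Real_Asymp"
begin

text \<open>
  All channels here factor through the binary channel W'', so their rows are mixtures
  t a + (1 - t) b of the two rows a, b of W''. For such a channel the mutual information of an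
  input distribution \<mu> is the Jensen gap \<Sum> \<mu> F(t) - F(\<Sum> \<mu> t) of the negative entropy F of the
  mixture, which is strictly convex in t. Moving mass to the extreme values of t only enlarges
  this gap, so the capacity is the largest Jensen gap of F on the interval spanned by the values
  of t, and that quantity strictly increases when the interval strictly grows. With causal state
  information the inputs are strategies u, with t(u) = \<Sum> p(s) K_s(u(s), 1) over states s; they
  include the constant strategies, so the interval can only grow, and it keeps its left (right)
  end exactly when one input minimises (maximises) K_s(-, 1) for every state of positive
  probability.
\<close>

definition xlnx :: "real \<Rightarrow> real" where
  "xlnx x = x * ln x"

definition neg_entropy :: "'b set \<Rightarrow> ('b \<Rightarrow> real) \<Rightarrow> real" where
  "neg_entropy B P = (\<Sum>y\<in>B. xlnx (P y))"

definition mixture :: "('b \<Rightarrow> real) \<Rightarrow> ('b \<Rightarrow> real) \<Rightarrow> real \<Rightarrow> 'b \<Rightarrow> real" where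
  "mixture a b t y = t * a y + (1 - t) * b y"

lemma xlnx_tangent_less:
  assumes "0 < z" "0 \<le> w" "w \<noteq> z"
  shows "xlnx z + (1 + ln z) * (w - z) < xlnx w"
proof (cases "w = 0")
  case True
  with assms show ?thesis by (simp add: xlnx_def algebra_simps)
next
  case False
  with assms have "ln z - ln w < (z - w) / w" by (intro ln_diff_less) auto
  with False assms have "w * (ln z - ln w) < z - w" by (simp add: field_simps)
  then show ?thesis by (simp add: xlnx_def algebra_simps)
qed

lemma xlnx_strict_convex:
  assumes "0 \<le> x" "0 \<le> y" "0 < l" "l < 1" "x \<noteq> y"
  shows "xlnx (l * x + (1 - l) * y) < l * xlnx x + (1 - l) * xlnx y"
proof -
  define z where "z = l * x + (1 - l) * y"
  define T where "T w = xlnx z + (1 + ln z) * (w - z)" for w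
  have "0 < z" using assms unfolding z_def by (smt (verit) mult_nonneg_nonneg mult_pos_pos)
  have "z - x = (1 - l) * (y - x)" "z - y = l * (x - y)" by (simp_all add: z_def algebra_simps)
  then have "x \<noteq> z" "y \<noteq> z" using assms by auto
  then have below: "l * T x < l * xlnx x" "(1 - l) * T y < (1 - l) * xlnx y"
    using xlnx_tangent_less[OF \<open>0 < z\<close>] assms by (simp_all add: T_def)
  have "l * T x + (1 - l) * T y = xlnx z + (1 + ln z) * (l * (x - z) + (1 - l) * (y - z))"
    unfolding T_def by (simp add: algebra_simps)
  also have "l * (x - z) + (1 - l) * (y - z) = 0" by (simp add: z_def algebra_simps)
  finally have "l * T x + (1 - l) * T y = xlnx z" by simp
  with below have "xlnx z < l * xlnx x + (1 - l) * xlnx y" by linarith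
  then show ?thesis by (simp add: z_def)
qed

lemma xlnx_convex:
  assumes "0 \<le> x" "0 \<le> y" "0 \<le> l" "l \<le> 1"
  shows "xlnx (l * x + (1 - l) * y) \<le> l * xlnx x + (1 - l) * xlnx y"
proof -
  consider "x = y" | "l = 0" | "l = 1" | "x \<noteq> y" "0 < l" "l < 1"
    using assms by linarith
  then show ?thesis
    by cases (use xlnx_strict_convex[of x y l] assms in \<open>auto simp: algebra_simps\<close>)
qed

lemma continuous_on_xlnx: "continuous_on {0..} xlnx"
proof -
  have "continuous (at x within {0..}) xlnx" if "x \<ge> 0" for x
  proof (cases "x = 0")
    case True
    have "(xlnx \<longlongrightarrow> 0) (at_right 0)" unfolding xlnx_def by real_asymp
    with True show ?thesis by (simp add: continuous_within at_within_Ici_at_right xlnx_def)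
  next
    case False
    with that have "isCont xlnx x" unfolding xlnx_def by (intro continuous_intros) auto
    then show ?thesis using continuous_at_imp_continuous_within by blast
  qed
  then show ?thesis using continuous_on_eq_continuous_within by blast
qed

lemma mixture_nonneg:
  assumes "0 \<le> a y" "0 \<le> b y" "0 \<le> t" "t \<le> 1"
  shows "0 \<le> mixture a b t y"
  using assms by (simp add: mixture_def)

lemma mixture_convex_comb:
  "mixture a b (l * s + (1 - l) * t) y = l * mixture a b s y + (1 - l) * mixture a b t y"
  by (simp add: mixture_def algebra_simps)

lemma xlnx_mixture_convex:
  assumes "0 \<le> a y" "0 \<le> b y" "s \<in> {0..1}" "t \<in> {0..1}" "0 \<le> l" "l \<le> 1"
  shows "xlnx (mixture a b (l * s + (1 - l) * t) y)
    \<le> l * xlnx (mixture a b s y) + (1 - l) * xlnx (mixture a b t y)"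
  unfolding mixture_convex_comb by (intro xlnx_convex mixture_nonneg) (use assms in auto)

lemma neg_entropy_mixture_strict_convex:
  assumes "finite B" "\<forall>y\<in>B. 0 \<le> a y \<and> 0 \<le> b y" "\<exists>y\<in>B. a y \<noteq> b y"
    and "s \<in> {0..1}" "t \<in> {0..1}" "0 < l" "l < 1" "s \<noteq> t"
  shows "neg_entropy B (mixture a b (l * s + (1 - l) * t))
    < l * neg_entropy B (mixture a b s) + (1 - l) * neg_entropy B (mixture a b t)"
proof -
  obtain y0 where y0: "y0 \<in> B" "a y0 \<noteq> b y0" using assms(3) by blast
  have "mixture a b s y0 - mixture a b t y0 = (s - t) * (a y0 - b y0)"
    by (simp add: mixture_def algebra_simps)
  with y0 assms(8) have "mixture a b s y0 \<noteq> mixture a b t y0" by auto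
  then have "\<exists>y\<in>B. xlnx (mixture a b (l * s + (1 - l) * t) y)
      < l * xlnx (mixture a b s y) + (1 - l) * xlnx (mixture a b t y)"
    unfolding mixture_convex_comb using y0(1) assms
    by (intro bexI[of _ y0] xlnx_strict_convex mixture_nonneg) auto
  then have "neg_entropy B (mixture a b (l * s + (1 - l) * t))
      < (\<Sum>y\<in>B. l * xlnx (mixture a b s y) + (1 - l) * xlnx (mixture a b t y))"
    unfolding neg_entropy_def using assms
    by (intro sum_strict_mono_ex1 ballI xlnx_mixture_convex) auto
  then show ?thesis by (simp add: neg_entropy_def sum.distrib sum_distrib_left)
qed

locale strictly_convex_on_unit =
  fixes F :: "real \<Rightarrow> real"
  assumes strict_convex: "\<And>s t l. s \<in> {0..1} \<Longrightarrow> t \<in> {0..1} \<Longrightarrow> 0 < l \<Longrightarrow> l < 1 \<Longrightarrow> s \<noteq> t \<Longrightarrow>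
      F (l * s + (1 - l) * t) < l * F s + (1 - l) * F t"
    and continuous: "continuous_on {0..1} F"

lemma strictly_convex_on_unit_neg_entropy_mixture:
  assumes "finite B" "\<forall>y\<in>B. 0 \<le> a y \<and> 0 \<le> b y" "\<exists>y\<in>B. a y \<noteq> b y"
  shows "strictly_convex_on_unit (\<lambda>t. neg_entropy B (mixture a b t))"
proof
  show "continuous_on {0..1} (\<lambda>t. neg_entropy B (mixture a b t))"
    unfolding neg_entropy_def
  proof (intro continuous_on_sum)
    fix y assume "y \<in> B"
    have "continuous_on {0..1} (\<lambda>t. mixture a b t y)"
      unfolding mixture_def by (intro continuous_intros)
    moreover have "(\<lambda>t. mixture a b t y) ` {0..1} \<subseteq> {0..}"
      using assms(2) \<open>y \<in> B\<close> by (auto intro: mixture_nonneg)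
    ultimately show "continuous_on {0..1} (\<lambda>t. xlnx (mixture a b t y))"
      using continuous_on_compose2[OF continuous_on_xlnx] by blast
  qed
qed (rule neg_entropy_mixture_strict_convex[OF assms])

definition jensen_gap :: "(real \<Rightarrow> real) \<Rightarrow> real \<Rightarrow> real \<Rightarrow> real \<Rightarrow> real" where
  "jensen_gap F lo hi v = v * F lo + (1 - v) * F hi - F (v * lo + (1 - v) * hi)"

definition max_jensen_gap :: "(real \<Rightarrow> real) \<Rightarrow> real \<Rightarrow> real \<Rightarrow> real" where
  "max_jensen_gap F lo hi = (SUP v\<in>{0..1}. jensen_gap F lo hi v)"

definition chord_weight :: "real \<Rightarrow> real \<Rightarrow> real \<Rightarrow> real" where
  "chord_weight lo hi x = (if lo = hi then 1 else (hi - x) / (hi - lo))"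

lemma chord_weight:
  assumes "lo \<le> x" "x \<le> hi"
  shows "chord_weight lo hi x \<in> {0..1}"
    and "x = chord_weight lo hi x * lo + (1 - chord_weight lo hi x) * hi"
    and "lo < x \<Longrightarrow> x < hi \<Longrightarrow> chord_weight lo hi x \<in> {0<..<1}"
  using assms by (auto simp: chord_weight_def field_simps)

lemma convex_comb_in_unit:
  fixes s t v :: real
  assumes "s \<in> {0..1}" "t \<in> {0..1}" "v \<in> {0..1}"
  shows "v * s + (1 - v) * t \<in> {0..1}"
proof -
  have "v * s + (1 - v) * t \<le> v * 1 + (1 - v) * 1"
    by (intro add_mono mult_left_mono) (use assms in auto)
  with assms show ?thesis by simp
qed

lemma sum_mult_convex_comb:
  fixes \<mu> w :: "'a \<Rightarrow> real"
  assumes "sum \<mu> A = 1"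
  shows "(\<Sum>x\<in>A. \<mu> x * (w x * c + (1 - w x) * d))
    = (\<Sum>x\<in>A. \<mu> x * w x) * c + (1 - (\<Sum>x\<in>A. \<mu> x * w x)) * d"
proof -
  have "(\<Sum>x\<in>A. \<mu> x * (w x * c + (1 - w x) * d))
      = (\<Sum>x\<in>A. \<mu> x * w x * c + \<mu> x * d - \<mu> x * w x * d)"
    by (simp add: algebra_simps)
  also have "\<dots> = (\<Sum>x\<in>A. \<mu> x * w x) * c + sum \<mu> A * d - (\<Sum>x\<in>A. \<mu> x * w x) * d"
    by (simp add: sum.distrib sum_subtractf sum_distrib_right)
  finally show ?thesis using assms by (simp add: algebra_simps)
qed

context strictly_convex_on_unit
begin

lemma convex:
  assumes "s \<in> {0..1}" "t \<in> {0..1}" "0 \<le> l" "l \<le> 1"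
  shows "F (l * s + (1 - l) * t) \<le> l * F s + (1 - l) * F t"
proof -
  consider "s = t" | "l = 0" | "l = 1" | "s \<noteq> t" "0 < l" "l < 1"
    using assms by linarith
  then show ?thesis
    by cases (use strict_convex[of s t l] assms in \<open>auto simp: algebra_simps\<close>)
qed

lemma below_chord:
  assumes "lo \<le> x" "x \<le> hi" "lo \<in> {0..1}" "hi \<in> {0..1}"
  shows "F x \<le> chord_weight lo hi x * F lo + (1 - chord_weight lo hi x) * F hi"
    and "lo < x \<Longrightarrow> x < hi \<Longrightarrow>
      F x < chord_weight lo hi x * F lo + (1 - chord_weight lo hi x) * F hi"
proof -
  let ?w = "chord_weight lo hi x"
  have Fx: "F x = F (?w * lo + (1 - ?w) * hi)"
    using chord_weight(2)[OF assms(1,2)] by (rule arg_cong)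
  show "F x \<le> ?w * F lo + (1 - ?w) * F hi"
    using convex[OF assms(3,4), of ?w] chord_weight(1)[OF assms(1,2)] Fx by simp
  assume "lo < x" "x < hi"
  then show "F x < ?w * F lo + (1 - ?w) * F hi"
    using strict_convex[OF assms(3,4), of ?w] chord_weight(3)[OF assms(1,2)] Fx by simp
qed

lemma jensen_gap_maximizer:
  assumes "lo \<in> {0..1}" "hi \<in> {0..1}"
  obtains v where "v \<in> {0..1}" "\<forall>w\<in>{0..1}. jensen_gap F lo hi w \<le> jensen_gap F lo hi v"
    and "max_jensen_gap F lo hi = jensen_gap F lo hi v"
proof -
  have "(\<lambda>v. v * lo + (1 - v) * hi) ` {0..1} \<subseteq> {0..1}"
    using convex_comb_in_unit[OF assms] by auto
  then have "continuous_on {0..1} (\<lambda>v. F (v * lo + (1 - v) * hi))"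
    by (intro continuous_on_compose2[OF continuous] continuous_intros)
  then have "continuous_on {0..1} (jensen_gap F lo hi)"
    unfolding jensen_gap_def by (intro continuous_intros)
  then obtain v where v: "v \<in> {0..1}" "\<forall>w\<in>{0..1}. jensen_gap F lo hi w \<le> jensen_gap F lo hi v"
    using continuous_attains_sup[of "{0..1}" "jensen_gap F lo hi"] by auto
  then have "max_jensen_gap F lo hi = jensen_gap F lo hi v"
    unfolding max_jensen_gap_def by (intro cSup_eq_maximum) auto
  with v that show thesis by blast
qed

lemma jensen_gap_le_max:
  assumes "lo \<in> {0..1}" "hi \<in> {0..1}" "v \<in> {0..1}"
  shows "jensen_gap F lo hi v \<le> max_jensen_gap F lo hi"
  using jensen_gap_maximizer[OF assms(1,2)] assms(3) by metis

lemma average_jensen_gap_le: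
  assumes "pdist A \<mu>" "lo \<in> {0..1}" "hi \<in> {0..1}" "\<forall>x\<in>A. t x \<in> {lo..hi}"
  shows "(\<Sum>x\<in>A. \<mu> x * F (t x)) - F (\<Sum>x\<in>A. \<mu> x * t x) \<le> max_jensen_gap F lo hi"
proof -
  define w where "w x = chord_weight lo hi (t x)" for x
  define v where "v = (\<Sum>x\<in>A. \<mu> x * w x)"
  have \<mu>: "\<forall>x\<in>A. 0 \<le> \<mu> x" "sum \<mu> A = 1" using assms(1) by (auto simp: pdist_def)
  have w: "w x \<in> {0..1}" "t x = w x * lo + (1 - w x) * hi" if "x \<in> A" for x
    using chord_weight(1,2) assms(4) that unfolding w_def by auto
  have "v \<le> sum \<mu> A"
    unfolding v_def using \<mu> w by (intro sum_mono) (simp add: mult_left_le)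
  moreover have "0 \<le> v" unfolding v_def using \<mu> w by (intro sum_nonneg) auto
  ultimately have v: "v \<in> {0..1}" using \<mu> by simp
  have "(\<Sum>x\<in>A. \<mu> x * t x) = (\<Sum>x\<in>A. \<mu> x * (w x * lo + (1 - w x) * hi))"
    using w by (intro sum.cong) auto
  also have "\<dots> = v * lo + (1 - v) * hi"
    unfolding v_def by (rule sum_mult_convex_comb[OF \<mu>(2)])
  finally have mean: "(\<Sum>x\<in>A. \<mu> x * t x) = v * lo + (1 - v) * hi" .
  have "(\<Sum>x\<in>A. \<mu> x * F (t x)) \<le> (\<Sum>x\<in>A. \<mu> x * (w x * F lo + (1 - w x) * F hi))"
    using \<mu>(1) below_chord(1) assms(2-4) unfolding w_def by (intro sum_mono mult_left_mono) auto
  also have "\<dots> = v * F lo + (1 - v) * F hi"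
    unfolding v_def by (rule sum_mult_convex_comb[OF \<mu>(2)])
  finally have "(\<Sum>x\<in>A. \<mu> x * F (t x)) - F (\<Sum>x\<in>A. \<mu> x * t x) \<le> jensen_gap F lo hi v"
    unfolding jensen_gap_def mean by simp
  also have "\<dots> \<le> max_jensen_gap F lo hi" using jensen_gap_le_max assms(2,3) v .
  finally show ?thesis .
qed

text \<open>
  A maximising weight v for [lo, hi] is matched by a weight v' for [lo', hi'] that mixes to
  the same point; since lo and hi lie below the chord of F over [lo', hi'], strictly so for an
  endpoint that moved, the gap at v' is strictly larger. If the gap at v is not positive,
  strict convexity already makes the gap at 1/2 for [lo', hi'] positive.
\<close>
lemma max_jensen_gap_strict_mono:
  assumes "lo' \<le> lo" "lo \<le> hi" "hi \<le> hi'" "0 \<le> lo'" "hi' \<le> 1" "(lo, hi) \<noteq> (lo', hi')"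
  shows "max_jensen_gap F lo hi < max_jensen_gap F lo' hi'"
proof -
  have unit: "lo \<in> {0..1}" "hi \<in> {0..1}" "lo' \<in> {0..1}" "hi' \<in> {0..1}" using assms by auto
  have "lo' < hi'" using assms by auto
  obtain v where v: "v \<in> {0..1}" "max_jensen_gap F lo hi = jensen_gap F lo hi v"
    using jensen_gap_maximizer[OF unit(1,2)] by metis
  show ?thesis
  proof (cases "jensen_gap F lo hi v \<le> 0")
    case True
    have "0 < jensen_gap F lo' hi' (1/2)"
      using strict_convex[OF unit(3,4), of "1/2"] \<open>lo' < hi'\<close> by (simp add: jensen_gap_def)
    also have "\<dots> \<le> max_jensen_gap F lo' hi'" using jensen_gap_le_max unit(3,4) by simp
    finally show ?thesis using True v(2) by simp
  next
    case False
    then have "v \<noteq> 0" "v \<noteq> 1" "lo \<noteq> hi" by (auto simp: jensen_gap_def algebra_simps)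
    with v(1) assms(2) have "0 < v" "v < 1" "lo < hi" by auto
    define al be where "al = chord_weight lo' hi' lo" and "be = chord_weight lo' hi' hi"
    define v' where "v' = v * al + (1 - v) * be"
    have al: "al \<in> {0..1}" "lo = al * lo' + (1 - al) * hi'" "F lo \<le> al * F lo' + (1 - al) * F hi'"
      using chord_weight(1,2)[of lo' lo hi'] below_chord(1)[of lo' lo hi'] assms unit
      unfolding al_def by auto
    have be: "be \<in> {0..1}" "hi = be * lo' + (1 - be) * hi'" "F hi \<le> be * F lo' + (1 - be) * F hi'"
      using chord_weight(1,2)[of lo' hi hi'] below_chord(1)[of lo' hi hi'] assms unit
      unfolding be_def by auto
    have "lo' < lo \<or> hi < hi'" using assms by auto
    then have "F lo < al * F lo' + (1 - al) * F hi' \<or> F hi < be * F lo' + (1 - be) * F hi'"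
      using below_chord(2)[of lo' lo hi'] below_chord(2)[of lo' hi hi'] assms(1-3) unit \<open>lo < hi\<close>
      unfolding al_def be_def by fastforce
    with al(3) be(3) \<open>0 < v\<close> \<open>v < 1\<close>
    have "v * F lo + (1 - v) * F hi
        < v * (al * F lo' + (1 - al) * F hi') + (1 - v) * (be * F lo' + (1 - be) * F hi')"
      by (auto intro: add_less_le_mono add_le_less_mono)
    also have "\<dots> = v' * F lo' + (1 - v') * F hi'"
      unfolding v'_def by (simp add: algebra_simps)
    finally have chords: "v * F lo + (1 - v) * F hi < v' * F lo' + (1 - v') * F hi'" .
    have "v' * lo' + (1 - v') * hi' = v * lo + (1 - v) * hi"
      unfolding v'_def by (subst al(2), subst be(2)) (simp add: algebra_simps)
    with chords have "jensen_gap F lo hi v < jensen_gap F lo' hi' v'"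
      unfolding jensen_gap_def by simp
    also have "\<dots> \<le> max_jensen_gap F lo' hi'"
      using jensen_gap_le_max unit(3,4) convex_comb_in_unit[OF al(1) be(1) v(1)] by (simp add: v'_def)
    finally show ?thesis using v(2) by simp
  qed
qed

lemma max_jensen_gap_Min_Max_eq_iff:
  assumes "finite Y" "X \<noteq> {}" "X \<subseteq> Y" "Y \<subseteq> {0..1}"
  shows "max_jensen_gap F (Min Y) (Max Y) = max_jensen_gap F (Min X) (Max X)
    \<longleftrightarrow> Min Y = Min X \<and> Max Y = Max X"
proof
  have "finite X" "Y \<noteq> {}" using assms finite_subset by auto
  then have "Min Y \<in> Y" "Max Y \<in> Y" by (simp_all add: assms(1))
  then have "0 \<le> Min Y" "Max Y \<le> 1" using assms(4) by auto
  obtain x where "x \<in> X" using assms(2) by blast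
  then have "Min X \<le> Max X" using Min_le Max_ge \<open>finite X\<close> by (meson order_trans)
  moreover note Min_antimono[OF assms(3,2,1)] Max_mono[OF assms(3,2,1)] \<open>0 \<le> Min Y\<close> \<open>Max Y \<le> 1\<close>
  moreover assume "max_jensen_gap F (Min Y) (Max Y) = max_jensen_gap F (Min X) (Max X)"
  ultimately show "Min Y = Min X \<and> Max Y = Max X"
    using max_jensen_gap_strict_mono[of "Min Y" "Min X" "Max X" "Max Y"] by fastforce
qed simp

end

definition two_point_dist :: "'a \<Rightarrow> 'a \<Rightarrow> real \<Rightarrow> 'a \<Rightarrow> real" where
  "two_point_dist x1 x2 v x = (if x = x1 then v else 0) + (if x = x2 then 1 - v else 0)"

lemma sum_two_point_dist:
  assumes "finite A" "x1 \<in> A" "x2 \<in> A"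
  shows "(\<Sum>x\<in>A. two_point_dist x1 x2 v x * g x) = v * g x1 + (1 - v) * g x2"
proof -
  have "(\<Sum>x\<in>A. two_point_dist x1 x2 v x * g x)
      = (\<Sum>x\<in>A. if x = x1 then v * g x else 0) + (\<Sum>x\<in>A. if x = x2 then (1 - v) * g x else 0)"
    unfolding two_point_dist_def sum.distrib[symmetric] by (intro sum.cong) (auto simp: algebra_simps)
  with assms show ?thesis by simp
qed

lemma pdist_two_point_dist:
  assumes "finite A" "x1 \<in> A" "x2 \<in> A" "v \<in> {0..1}"
  shows "pdist A (two_point_dist x1 x2 v)"
  using sum_two_point_dist[OF assms(1-3), of v "\<lambda>_. 1"] assms
  by (auto simp: pdist_def two_point_dist_def)

lemma mutual_info_neg_entropy:
  assumes "pdist A \<mu>" "finite B" "\<forall>x\<in>A. \<forall>y\<in>B. 0 \<le> W x y"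
  shows "mutual_info A B \<mu> W = (\<Sum>x\<in>A. \<mu> x * neg_entropy B (W x)) - neg_entropy B (out_dist A \<mu> W)"
proof -
  let ?Q = "out_dist A \<mu> W"
  have \<mu>: "finite A" "\<forall>x\<in>A. 0 \<le> \<mu> x" using assms(1) by (auto simp: pdist_def)
  have summand: "\<mu> x * (if W x y > 0 then W x y * ln (W x y / ?Q y) else 0)
      = \<mu> x * xlnx (W x y) - \<mu> x * W x y * ln (?Q y)" if "x \<in> A" "y \<in> B" for x y
  proof (cases "\<mu> x = 0 \<or> W x y = 0")
    case False
    with \<mu> assms(3) that have pos: "\<mu> x > 0" "W x y > 0" by force+
    have "\<mu> x * W x y \<le> ?Q y" unfolding out_dist_def
      using member_le_sum[where f = "\<lambda>x. \<mu> x * W x y", OF that(1)] \<mu> assms(3) that by simp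
    with pos have "?Q y > 0" by (smt (verit) mult_pos_pos)
    with pos show ?thesis by (simp add: xlnx_def ln_div algebra_simps)
  qed (auto simp: xlnx_def)
  have "mutual_info A B \<mu> W = (\<Sum>x\<in>A. \<Sum>y\<in>B. \<mu> x * xlnx (W x y) - \<mu> x * W x y * ln (?Q y))"
    unfolding mutual_info_def KL_def sum_distrib_left using summand by (intro sum.cong) auto
  also have "\<dots> = (\<Sum>x\<in>A. \<mu> x * neg_entropy B (W x)) - (\<Sum>y\<in>B. \<Sum>x\<in>A. \<mu> x * W x y * ln (?Q y))"
    by (simp add: neg_entropy_def sum_subtractf sum_distrib_left sum.swap[of _ B A])
  also have "(\<Sum>y\<in>B. \<Sum>x\<in>A. \<mu> x * W x y * ln (?Q y)) = neg_entropy B ?Q"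
    unfolding neg_entropy_def xlnx_def out_dist_def by (simp add: sum_distrib_right)
  finally show ?thesis .
qed

lemma out_dist_mixture:
  assumes "sum \<mu> A = 1"
  shows "out_dist A \<mu> (\<lambda>x. mixture a b (t x)) = mixture a b (\<Sum>x\<in>A. \<mu> x * t x)"
  using sum_mult_convex_comb[OF assms, of t] by (simp add: fun_eq_iff out_dist_def mixture_def)

lemma mutual_info_mixture:
  assumes "pdist A \<mu>" "finite B" "\<forall>y\<in>B. 0 \<le> a y \<and> 0 \<le> b y" "\<forall>x\<in>A. t x \<in> {0..1}"
  shows "mutual_info A B \<mu> (\<lambda>x. mixture a b (t x))
    = (\<Sum>x\<in>A. \<mu> x * neg_entropy B (mixture a b (t x))) - neg_entropy B (mixture a b (\<Sum>x\<in>A. \<mu> x * t x))"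
proof -
  have "sum \<mu> A = 1" using assms(1) by (simp add: pdist_def)
  then have "out_dist A \<mu> (\<lambda>x. mixture a b (t x)) = mixture a b (\<Sum>x\<in>A. \<mu> x * t x)"
    by (rule out_dist_mixture)
  moreover have "\<forall>x\<in>A. \<forall>y\<in>B. 0 \<le> mixture a b (t x) y"
    using assms(3,4) by (auto intro: mixture_nonneg)
  ultimately show ?thesis
    using mutual_info_neg_entropy[OF assms(1,2)] by simp
qed

lemma capacity_cong:
  assumes "\<forall>x\<in>A. \<forall>y\<in>B. W x y = W' x y"
  shows "capacity A B W = capacity A B W'"
proof -
  have "out_dist A \<mu> W y = out_dist A \<mu> W' y" if "y \<in> B" for \<mu> y
    unfolding out_dist_def using assms that by (intro sum.cong) auto
  then have "mutual_info A B \<mu> W = mutual_info A B \<mu> W'" for \<mu>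
    unfolding mutual_info_def KL_def using assms
    by (intro sum.cong refl arg_cong2[where f = "(*)"]) auto
  then show ?thesis unfolding capacity_def by simp
qed

lemma capacity_eqI:
  assumes "\<And>\<mu>. pdist A \<mu> \<Longrightarrow> mutual_info A B \<mu> W \<le> c"
    and "pdist A \<mu>\<^sub>0" "mutual_info A B \<mu>\<^sub>0 W = c"
  shows "capacity A B W = c"
  unfolding capacity_def using assms by (intro cSup_eq_maximum) auto

lemma capacity_mixture_channel:
  assumes "finite A" "A \<noteq> {}" "finite B" "\<forall>y\<in>B. 0 \<le> a y \<and> 0 \<le> b y" "\<exists>y\<in>B. a y \<noteq> b y"
    and "\<forall>x\<in>A. t x \<in> {0..1}"
  shows "capacity A B (\<lambda>x. mixture a b (t x))
    = max_jensen_gap (\<lambda>s. neg_entropy B (mixture a b s)) (Min (t ` A)) (Max (t ` A))"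
proof -
  let ?F = "\<lambda>s. neg_entropy B (mixture a b s)"
  interpret strictly_convex_on_unit ?F
    using assms(3-5) by (rule strictly_convex_on_unit_neg_entropy_mixture)
  let ?lo = "Min (t ` A)" and ?hi = "Max (t ` A)"
  have "finite (t ` A)" "t ` A \<noteq> {}" using assms(1,2) by auto
  then obtain x1 x2 where x1: "x1 \<in> A" "t x1 = ?lo" and x2: "x2 \<in> A" "t x2 = ?hi"
    using Min_in Max_in by (metis imageE)
  have range: "\<forall>x\<in>A. t x \<in> {?lo..?hi}" using assms(1) by simp
  have unit: "?lo \<in> {0..1}" "?hi \<in> {0..1}" using x1 x2 assms(6) by force+
  obtain v where v: "v \<in> {0..1}" "max_jensen_gap ?F ?lo ?hi = jensen_gap ?F ?lo ?hi v"
    using jensen_gap_maximizer[OF unit] by metis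
  have two_point: "pdist A (two_point_dist x1 x2 v)"
    by (rule pdist_two_point_dist[OF assms(1) x1(1) x2(1) v(1)])
  show ?thesis
  proof (rule capacity_eqI[OF _ two_point])
    show "mutual_info A B \<mu> (\<lambda>x. mixture a b (t x)) \<le> max_jensen_gap ?F ?lo ?hi"
      if "pdist A \<mu>" for \<mu>
      unfolding mutual_info_mixture[OF that assms(3,4,6)]
      using average_jensen_gap_le[OF that unit range] .
    show "mutual_info A B (two_point_dist x1 x2 v) (\<lambda>x. mixture a b (t x)) = max_jensen_gap ?F ?lo ?hi"
      unfolding mutual_info_mixture[OF two_point assms(3,4,6)] v(2) jensen_gap_def
      by (simp add: sum_two_point_dist[OF assms(1) x1(1) x2(1)] x1(2) x2(2))
  qed
qed

lemma channel_binary_output: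
  assumes "channel A {1::nat, 2} W" "x \<in> A"
  shows "W x 1 \<in> {0..1}" "W x 2 = 1 - W x 1"
proof -
  have "W x 1 + W x 2 = 1" "0 \<le> W x 1" "0 \<le> W x 2"
    using assms unfolding channel_def by auto
  then show "W x 1 \<in> {0..1}" "W x 2 = 1 - W x 1" by auto
qed

lemma chan_comp_binary:
  assumes "channel A {1::nat, 2} W" "x \<in> A"
  shows "chan_comp {1, 2} W W2 x y = mixture (W2 1) (W2 2) (W x 1) y"
  using channel_binary_output[OF assms] by (simp add: chan_comp_def mixture_def)

lemma capacity_chan_comp_binary:
  assumes "channel A {1::nat, 2} W" "A \<noteq> {}" "channel {1, 2} B W2" "\<exists>y\<in>B. W2 1 y \<noteq> W2 2 y"
  shows "capacity A B (chan_comp {1, 2} W W2)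
    = max_jensen_gap (\<lambda>s. neg_entropy B (mixture (W2 1) (W2 2) s))
        (Min ((\<lambda>x. W x 1) ` A)) (Max ((\<lambda>x. W x 1) ` A))"
proof -
  have "capacity A B (chan_comp {1, 2} W W2) = capacity A B (\<lambda>x. mixture (W2 1) (W2 2) (W x 1))"
    using chan_comp_binary[OF assms(1)] by (intro capacity_cong) auto
  also have "\<dots> = max_jensen_gap (\<lambda>s. neg_entropy B (mixture (W2 1) (W2 2) s))
        (Min ((\<lambda>x. W x 1) ` A)) (Max ((\<lambda>x. W x 1) ` A))"
    using assms channel_binary_output(1)[OF assms(1)]
    by (intro capacity_mixture_channel) (auto simp: channel_def)
  finally show ?thesis .
qed

lemma channel_strategy:
  assumes "pdist S p" "\<forall>s\<in>S. channel I B (K s)"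
  shows "channel (S \<rightarrow>\<^sub>E I) B (\<lambda>u y. \<Sum>s\<in>S. p s * K s (u s) y)"
proof -
  have p: "finite S" "\<forall>s\<in>S. 0 \<le> p s" "sum p S = 1" using assms(1) by (auto simp: pdist_def)
  then obtain s0 where "s0 \<in> S" by fastforce
  with assms(2) have "finite I" "finite B" by (auto simp: channel_def)
  have "(\<Sum>y\<in>B. \<Sum>s\<in>S. p s * K s (u s) y) = 1" if "u \<in> S \<rightarrow>\<^sub>E I" for u
  proof -
    have "(\<Sum>y\<in>B. \<Sum>s\<in>S. p s * K s (u s) y) = (\<Sum>s\<in>S. p s * (\<Sum>y\<in>B. K s (u s) y))"
      by (simp add: sum.swap[of _ B S] sum_distrib_left)
    also have "\<dots> = sum p S"
      using assms(2) that by (intro sum.cong) (auto simp: channel_def PiE_iff)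
    finally show ?thesis using p(3) by simp
  qed
  moreover have "0 \<le> (\<Sum>s\<in>S. p s * K s (u s) y)" if "u \<in> S \<rightarrow>\<^sub>E I" "y \<in> B" for u y
    using assms(2) p(2) that by (intro sum_nonneg mult_nonneg_nonneg) (auto simp: channel_def PiE_iff)
  ultimately show ?thesis
    using p(1) \<open>finite I\<close> \<open>finite B\<close> by (simp add: channel_def finite_PiE)
qed

lemma constant_strategy_average_subset:
  "(\<lambda>i. \<Sum>s\<in>S. p s * f s i) ` I \<subseteq> (\<lambda>u. \<Sum>s\<in>S. p s * f s (u s)) ` (S \<rightarrow>\<^sub>E I)"
proof
  fix c assume "c \<in> (\<lambda>i. \<Sum>s\<in>S. p s * f s i) ` I"
  then obtain i where "i \<in> I" "c = (\<Sum>s\<in>S. p s * f s i)" by blast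
  then show "c \<in> (\<lambda>u. \<Sum>s\<in>S. p s * f s (u s)) ` (S \<rightarrow>\<^sub>E I)"
    by (intro image_eqI[of _ _ "\<lambda>s\<in>S. i"]) auto
qed

lemma Min_strategy_average:
  fixes f :: "'s \<Rightarrow> 'i \<Rightarrow> real"
  assumes "finite S" "finite I" "I \<noteq> {}" "\<forall>s\<in>S. 0 \<le> p s"
  shows "Min ((\<lambda>u. \<Sum>s\<in>S. p s * f s (u s)) ` (S \<rightarrow>\<^sub>E I)) = (\<Sum>s\<in>S. p s * Min (f s ` I))"
proof (rule Min_eqI)
  show "finite ((\<lambda>u. \<Sum>s\<in>S. p s * f s (u s)) ` (S \<rightarrow>\<^sub>E I))"
    using assms(1,2) by (simp add: finite_PiE)
  show "(\<Sum>s\<in>S. p s * Min (f s ` I)) \<le> c" if "c \<in> (\<lambda>u. \<Sum>s\<in>S. p s * f s (u s)) ` (S \<rightarrow>\<^sub>E I)" for c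
    using that assms(2,4) by (auto intro!: sum_mono mult_left_mono simp: PiE_iff)
  have "Min (f s ` I) \<in> f s ` I" for s using assms(2,3) by simp
  then have "\<forall>s\<in>S. \<exists>i. i \<in> I \<and> f s i = Min (f s ` I)" by (metis imageE)
  from bchoice[OF this] obtain g where g: "\<forall>s\<in>S. g s \<in> I \<and> f s (g s) = Min (f s ` I)"
    by blast
  then show "(\<Sum>s\<in>S. p s * Min (f s ` I)) \<in> (\<lambda>u. \<Sum>s\<in>S. p s * f s (u s)) ` (S \<rightarrow>\<^sub>E I)"
    by (intro image_eqI[of _ _ "restrict g S"] sum.cong) (auto simp: PiE_iff)
qed

lemma average_eq_average_Min_iff:
  fixes f :: "'s \<Rightarrow> 'i \<Rightarrow> real"
  assumes "finite S" "finite I" "i \<in> I" "\<forall>s\<in>S. 0 \<le> p s"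
  shows "(\<Sum>s\<in>S. p s * f s i) = (\<Sum>s\<in>S. p s * Min (f s ` I))
    \<longleftrightarrow> (\<forall>s\<in>S. 0 < p s \<longrightarrow> f s i = Min (f s ` I))"
proof -
  have nonneg: "0 \<le> p s * (f s i - Min (f s ` I))" if "s \<in> S" for s
    using assms that by simp
  have "(\<Sum>s\<in>S. p s * f s i) - (\<Sum>s\<in>S. p s * Min (f s ` I)) = (\<Sum>s\<in>S. p s * (f s i - Min (f s ` I)))"
    by (simp add: right_diff_distrib sum_subtractf)
  also have "\<dots> = 0 \<longleftrightarrow> (\<forall>s\<in>S. p s * (f s i - Min (f s ` I)) = 0)"
    using assms(1) nonneg by (rule sum_nonneg_eq_0_iff)
  also have "\<dots> \<longleftrightarrow> (\<forall>s\<in>S. 0 < p s \<longrightarrow> f s i = Min (f s ` I))"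
    using assms(4) by (auto simp: le_less)
  finally show ?thesis by simp
qed

lemma Min_strategy_average_eq_iff:
  fixes f :: "'s \<Rightarrow> 'i \<Rightarrow> real"
  assumes "finite S" "finite I" "I \<noteq> {}" "\<forall>s\<in>S. 0 \<le> p s"
  shows "Min ((\<lambda>u. \<Sum>s\<in>S. p s * f s (u s)) ` (S \<rightarrow>\<^sub>E I)) = Min ((\<lambda>i. \<Sum>s\<in>S. p s * f s i) ` I)
    \<longleftrightarrow> (\<exists>i\<in>I. \<forall>s\<in>S. 0 < p s \<longrightarrow> f s i = Min (f s ` I))"
proof -
  let ?c = "\<Sum>s\<in>S. p s * Min (f s ` I)"
  let ?avg = "\<lambda>i. \<Sum>s\<in>S. p s * f s i"
  have "?c = Min (?avg ` I) \<longleftrightarrow> (\<exists>i\<in>I. ?avg i = ?c)"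
  proof
    assume "?c = Min (?avg ` I)"
    moreover have "Min (?avg ` I) \<in> ?avg ` I" using assms(2,3) by simp
    ultimately show "\<exists>i\<in>I. ?avg i = ?c" by auto
  next
    assume "\<exists>i\<in>I. ?avg i = ?c"
    then obtain i where "?avg i = ?c" "i \<in> I" by blast
    then have "?c \<in> ?avg ` I" by (rule image_eqI[OF sym])
    moreover have "?c \<le> ?avg i" if "i \<in> I" for i
      using that assms(2,4) by (intro sum_mono mult_left_mono) auto
    ultimately show "?c = Min (?avg ` I)"
      using assms(2) by (intro Min_eqI[symmetric]) auto
  qed
  also have "\<dots> \<longleftrightarrow> (\<exists>i\<in>I. \<forall>s\<in>S. 0 < p s \<longrightarrow> f s i = Min (f s ` I))"
    using average_eq_average_Min_iff[OF assms(1,2) _ assms(4)] by blast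
  finally show ?thesis unfolding Min_strategy_average[OF assms] .
qed

lemma Max_strategy_average_eq_iff:
  fixes f :: "'s \<Rightarrow> 'i \<Rightarrow> real"
  assumes "finite S" "finite I" "I \<noteq> {}" "\<forall>s\<in>S. 0 \<le> p s"
  shows "Max ((\<lambda>u. \<Sum>s\<in>S. p s * f s (u s)) ` (S \<rightarrow>\<^sub>E I)) = Max ((\<lambda>i. \<Sum>s\<in>S. p s * f s i) ` I)
    \<longleftrightarrow> (\<exists>i\<in>I. \<forall>s\<in>S. 0 < p s \<longrightarrow> f s i = Max (f s ` I))"
proof -
  have Min_neg: "Min ((\<lambda>x. - g x) ` X) = - Max (g ` X)" if "finite X" "X \<noteq> {}"
    for g :: "_ \<Rightarrow> real" and X :: "_ set"
    using minus_Max_eq_Min[of "g ` X"] that by (simp add: image_image)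
  have strategies: "finite (S \<rightarrow>\<^sub>E I)" "S \<rightarrow>\<^sub>E I \<noteq> {}"
    using assms by (simp_all add: finite_PiE PiE_eq_empty_iff)
  from Min_strategy_average_eq_iff[OF assms, of "\<lambda>s i. - f s i"] show ?thesis
    by (simp only: mult_minus_right sum_negf Min_neg strategies assms(2,3)
        neg_equal_iff_equal not_False_eq_True)
qed

lemma capacity_causal_state_eq_iff:
  fixes K :: "'s \<Rightarrow> 'i \<Rightarrow> nat \<Rightarrow> real" and W1 :: "'i \<Rightarrow> nat \<Rightarrow> real"
  assumes "I \<noteq> {}" "channel I {1, 2} W1" "channel {1, 2} B W2" "\<exists>y\<in>B. W2 1 y \<noteq> W2 2 y"
    and "pdist S p" "\<forall>s\<in>S. channel I {1, 2} (K s)" "\<forall>x\<in>I. W1 x 1 = (\<Sum>s\<in>S. p s * K s x 1)"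
  shows "capacity (S \<rightarrow>\<^sub>E I) B (chan_comp {1, 2} (\<lambda>u y. \<Sum>s\<in>S. p s * K s (u s) y) W2)
      = capacity I B (chan_comp {1, 2} W1 W2)
    \<longleftrightarrow> (\<exists>i\<in>I. \<forall>s\<in>S. 0 < p s \<longrightarrow> K s i 1 = (MIN i\<in>I. K s i 1))
      \<and> (\<exists>i\<in>I. \<forall>s\<in>S. 0 < p s \<longrightarrow> K s i 1 = (MAX i\<in>I. K s i 1))"
proof -
  let ?F = "\<lambda>t. neg_entropy B (mixture (W2 1) (W2 2) t)"
  let ?U = "S \<rightarrow>\<^sub>E I"
  let ?strategy_avg = "\<lambda>u. \<Sum>s\<in>S. p s * K s (u s) 1"
  let ?avg = "\<lambda>i. \<Sum>s\<in>S. p s * K s i 1"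
  have S: "finite S" "\<forall>s\<in>S. 0 \<le> p s" using assms(5) by (auto simp: pdist_def)
  have I: "finite I" using assms(2) by (simp add: channel_def)
  have V: "channel ?U {1, 2} (\<lambda>u y. \<Sum>s\<in>S. p s * K s (u s) y)"
    using assms(5,6) by (rule channel_strategy)
  have cap_V: "capacity ?U B (chan_comp {1, 2} (\<lambda>u y. \<Sum>s\<in>S. p s * K s (u s) y) W2)
      = max_jensen_gap ?F (Min (?strategy_avg ` ?U)) (Max (?strategy_avg ` ?U))"
    by (rule capacity_chan_comp_binary[OF V _ assms(3,4)])
      (use assms(1) in \<open>simp add: PiE_eq_empty_iff\<close>)
  have "(\<lambda>x. W1 x 1) ` I = ?avg ` I"
    using assms(7) by (intro image_cong) auto
  with capacity_chan_comp_binary[OF assms(2,1,3,4)]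
  have cap_W: "capacity I B (chan_comp {1, 2} W1 W2) = max_jensen_gap ?F (Min (?avg ` I)) (Max (?avg ` I))"
    by (simp only:)
  have "max_jensen_gap ?F (Min (?strategy_avg ` ?U)) (Max (?strategy_avg ` ?U))
      = max_jensen_gap ?F (Min (?avg ` I)) (Max (?avg ` I))
    \<longleftrightarrow> Min (?strategy_avg ` ?U) = Min (?avg ` I) \<and> Max (?strategy_avg ` ?U) = Max (?avg ` I)"
  proof (rule strictly_convex_on_unit.max_jensen_gap_Min_Max_eq_iff)
    show "strictly_convex_on_unit ?F"
      using assms(3,4) by (intro strictly_convex_on_unit_neg_entropy_mixture) (auto simp: channel_def)
    show "finite (?strategy_avg ` ?U)" using S(1) I by (simp add: finite_PiE)
    show "?avg ` I \<noteq> {}" using assms(1) by simp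
    show "?avg ` I \<subseteq> ?strategy_avg ` ?U" by (rule constant_strategy_average_subset)
    show "?strategy_avg ` ?U \<subseteq> {0..1}"
      using channel_binary_output(1)[OF V] by (intro image_subsetI) simp
  qed
  also have "\<dots> \<longleftrightarrow> (\<exists>i\<in>I. \<forall>s\<in>S. 0 < p s \<longrightarrow> K s i 1 = (MIN i\<in>I. K s i 1))
      \<and> (\<exists>i\<in>I. \<forall>s\<in>S. 0 < p s \<longrightarrow> K s i 1 = (MAX i\<in>I. K s i 1))"
    using Min_strategy_average_eq_iff[OF S(1) I assms(1) S(2), of "\<lambda>s i. K s i 1"]
      Max_strategy_average_eq_iff[OF S(1) I assms(1) S(2), of "\<lambda>s i. K s i 1"]
    by (rule conj_cong)
  finally show ?thesis unfolding cap_V cap_W .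
qed

theorem theorem5:
  fixes m n :: nat
    and W1 :: "nat \<Rightarrow> nat \<Rightarrow> real" and W2 :: "nat \<Rightarrow> nat \<Rightarrow> real"
    and S :: "'s set" and p :: "'s \<Rightarrow> real" and K :: "'s \<Rightarrow> nat \<Rightarrow> nat \<Rightarrow> real"
  assumes "m \<ge> 2" and "n \<ge> 2"
    and "channel {1..m} {1,2} W1"
    and "channel {1,2} {1..n} W2"
    and "\<exists>z\<in>{1..n}. W2 1 z \<noteq> W2 2 z"
    and "finite S" and "pdist S p"
    and "\<forall>s\<in>S. channel {1..m} {1,2} (K s)"
    and "\<forall>x\<in>{1..m}. \<forall>y\<in>{1,2}. W1 x y = (\<Sum>s\<in>S. p s * K s x y)"
  shows "capacity (S \<rightarrow>\<^sub>E {1..m}) {1..n}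
            (chan_comp {1,2} (\<lambda>u y. \<Sum>s\<in>S. p s * K s (u s) y) W2)
         = capacity {1..m} {1..n} (chan_comp {1,2} W1 W2)
     \<longleftrightarrow> (\<exists>i1\<in>{1..m}. \<exists>i2\<in>{1..m}. \<forall>s\<in>S. p s > 0 \<longrightarrow> ended m (K s) i1 i2)"
proof -
  have "{1..m} \<noteq> {}" "\<forall>x\<in>{1..m}. W1 x 1 = (\<Sum>s\<in>S. p s * K s x 1)"
    using assms(1,9) by auto
  from capacity_causal_state_eq_iff[OF this(1) assms(3-5,7,8) this(2)] show ?thesis
    unfolding ended_def by blast
qed

end
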